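(* In the setting below, $v_2(N)+c_2\le v_2(M)$.
   Context: $A$ is an abelian variety of dimension $g\ge1$ over a number field $K$, with $K$ large enough that all abelian subvarieties of $A_{\bar K}$ and homomorphisms between them are defined over $K$; $G_K=\mathrm{Gal}(\bar K/K)$, $A[l]$ is the $l$-torsion, $K_l=K(A[l])$, $K_{\mathrm{tors}}=K(A_{\mathrm{tors}})$, $[k]$ is multiplication by $k$, $K_Y$ is the field of definition of a subvariety $Y$. The integer $c=c(A)\ge1$ is fixed such that for any two coprime positive integers $l,k$ there is $\sigma\in G_K$ with $\sigma|_{A[l]}=[k^c]$ (Serre). $v_2$ is the 2-adic valuation and $c_2=v_2(c)$. Let $V\subset A$ be irreducible and not a torsion coset, $\mathrm{Stab}(V)=\{P:P+V=V\}$, $\varphi_V:A\to B$ a surjective homomorphism defined over $K$ onto an abelian subvariety $B$ with kernel $\mathrm{Stab}(V)$, $X=\varphi_V(V)$, and assume $K_X\subset K_{\mathrm{tors}}$. Let $M\ge1$ be the smallest integer with $K_X\subset K_M$ and $v_2(M)\ge c_2+2$. For $P\in A[M]$ let $\mathcal N(P)=\{\alpha\in\mathbb Z:\alpha>-v_2(M),\ \exists\sigma\in G_K,\ \sigma|_{A[M]}=[(1+2^{\alpha}M)^c]\text{ and }\sigma|_{K_{X+P}}=\mathrm{Id}\}$ (this contains all $\alpha\ge0$), let $\beta(P)$ be the largest integer not in $\mathcal N(P)$, $\beta=\min_{P\in A[M]}\beta(P)$, and $N=2^{\beta+1}M$. *)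

theory Defs
  imports Complex_Main "HOL-Algebra.Group" "HOL-Computational_Algebra.Primes"
begin

text \<open>The points of A over the algebraic closure form an abelian group of type 'a;
  G (the absolute Galois group G_K) acts on them by group automorphisms via act.\<close>

definition mult_int :: "int \<Rightarrow> 'a::ab_group_add \<Rightarrow> 'a" where
  "mult_int k x = (if 0 \<le> k then (\<Sum>i<nat k. x) else - (\<Sum>i<nat (- k). x))"

definition tors :: "int \<Rightarrow> 'a::ab_group_add set" where
  "tors n = {P. mult_int n P = 0}"

definition v2q :: "rat \<Rightarrow> int" where
  "v2q q = (THE e. \<exists>a b. odd a \<and> odd b \<and> q = of_int a / of_int b * 2 powi e)"

text \<open>The integer 2^alpha * M (alpha may be negative, with alpha > - v_2(M)).\<close>
definition twopow_mul :: "int \<Rightarrow> nat \<Rightarrow> int" where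
  "twopow_mul \<alpha> M = (if 0 \<le> \<alpha> then 2 ^ nat \<alpha> * int M else int M div 2 ^ nat (- \<alpha>))"

text \<open>The set N(P); H P is the subgroup Gal(Kbar / K_{X+P}) of G.\<close>
definition Nset :: "('g, 'b) monoid_scheme \<Rightarrow> ('g \<Rightarrow> 'a::ab_group_add \<Rightarrow> 'a)
    \<Rightarrow> ('a \<Rightarrow> 'g set) \<Rightarrow> nat \<Rightarrow> nat \<Rightarrow> 'a \<Rightarrow> int set" where
  "Nset G act H c M P = {\<alpha>. - int (multiplicity 2 M) < \<alpha> \<and>
     (\<exists>\<sigma>\<in>carrier G. (\<forall>Q\<in>tors (int M). act \<sigma> Q = mult_int ((1 + twopow_mul \<alpha> M) ^ c) Q)
                    \<and> \<sigma> \<in> H P)}"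

definition beta_P :: "('g, 'b) monoid_scheme \<Rightarrow> ('g \<Rightarrow> 'a::ab_group_add \<Rightarrow> 'a)
    \<Rightarrow> ('a \<Rightarrow> 'g set) \<Rightarrow> nat \<Rightarrow> nat \<Rightarrow> 'a \<Rightarrow> int" where
  "beta_P G act H c M P = (GREATEST \<alpha>. \<alpha> \<notin> Nset G act H c M P)"

definition beta :: "('g, 'b) monoid_scheme \<Rightarrow> ('g \<Rightarrow> 'a::ab_group_add \<Rightarrow> 'a)
    \<Rightarrow> ('a \<Rightarrow> 'g set) \<Rightarrow> nat \<Rightarrow> nat \<Rightarrow> int" where
  "beta G act H c M = Min (beta_P G act H c M ` tors (int M))"

definition Nnum :: "('g, 'b) monoid_scheme \<Rightarrow> ('g \<Rightarrow> 'a::ab_group_add \<Rightarrow> 'a)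
    \<Rightarrow> ('a \<Rightarrow> 'g set) \<Rightarrow> nat \<Rightarrow> nat \<Rightarrow> rat" where
  "Nnum G act H c M = 2 powi (beta G act H c M + 1) * of_nat M"

text \<open>Elements of G acting trivially on A[n], i.e. Gal(Kbar / K_n).\<close>
definition fixing :: "('g, 'b) monoid_scheme \<Rightarrow> ('g \<Rightarrow> 'a::ab_group_add \<Rightarrow> 'a) \<Rightarrow> nat \<Rightarrow> 'g set" where
  "fixing G act n = {\<sigma>\<in>carrier G. \<forall>Q\<in>tors (int n). act \<sigma> Q = Q}"

end

theory Submission
  imports Defs
begin

text \<open>Every \<open>\<alpha> \<ge> -c\<^sub>2\<close> lies in \<open>\<N>(P)\<close>, witnessed by the identity of \<open>G\<^sub>K\<close>:
  write \<open>M = 2^c\<^sub>2 \<cdot> d\<close> with \<open>d\<close> even. Then \<open>d\<close> divides \<open>2^\<alpha> M\<close>, and raising a number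
  \<open>\<equiv> 1 (mod d)\<close> to the power \<open>2^c\<^sub>2\<close>, hence to the power \<open>c\<close>, makes it \<open>\<equiv> 1 (mod M)\<close>;
  so \<open>[(1 + 2^\<alpha> M)^c]\<close> is the identity on \<open>A[M]\<close>. Therefore \<open>\<beta> \<le> -c\<^sub>2 - 1\<close>, while
  \<open>v\<^sub>2(N) = \<beta> + 1 + v\<^sub>2(M)\<close>.\<close>

lemma odd_mult_two_powi_eq_imp_le:
  fixes a b e e' :: int
  assumes "odd a" "odd b" and eq: "of_int a * (2::rat) powi e = of_int b * 2 powi e'"
  shows "e \<le> e'"
proof (rule ccontr)
  assume "\<not> e \<le> e'"
  then obtain k where k: "e = e' + int (Suc k)"
    by (metis not_le zless_iff_Suc_zadd)
  have "(of_int (a * 2 ^ Suc k) :: rat) * 2 powi e' = of_int b * 2 powi e'"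
    using eq unfolding k by (simp add: power_int_add mult_ac)
  then have "(of_int (a * 2 ^ Suc k) :: rat) = of_int b" by simp
  then have "a * 2 ^ Suc k = b" by (simp only: of_int_eq_iff)
  then show False using \<open>odd b\<close> by auto
qed

lemma v2q_odd_mult_two_powi:
  fixes u e :: int
  assumes "odd u"
  shows "v2q (of_int u * 2 powi e) = e"
  unfolding v2q_def
proof (rule the_equality)
  show "\<exists>a b. odd a \<and> odd b \<and> of_int u * 2 powi e = of_int a / of_int b * (2::rat) powi e"
    using assms by (intro exI[of _ u] exI[of _ 1]) simp
next
  fix e'
  assume "\<exists>a b. odd a \<and> odd b \<and> of_int u * 2 powi e = of_int a / of_int b * (2::rat) powi e'"
  then obtain a b where ab: "odd a" "odd b"
    and eq: "of_int u * 2 powi e = of_int a / of_int b * (2::rat) powi e'" by blast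
  have "(of_int b :: rat) \<noteq> 0" using \<open>odd b\<close> by auto
  with eq have eq': "of_int (u * b) * (2::rat) powi e = of_int a * 2 powi e'"
    by (simp add: field_simps)
  have "odd (u * b)" using assms ab by simp
  with ab eq' show "e' = e"
    using odd_mult_two_powi_eq_imp_le by (metis order.antisym)
qed

lemma Greatest_int_le:
  fixes P :: "int \<Rightarrow> bool"
  assumes "P b" and "\<And>x. P x \<Longrightarrow> x \<le> a"
  shows "Greatest P \<le> a"
proof -
  let ?T = "{x. P x} \<inter> {b..a}"
  have T: "finite ?T" "b \<in> ?T" using assms by auto
  have "Greatest P = Max ?T"
  proof (rule Greatest_equality)
    show "P (Max ?T)" using T Max_in by blast
    show "y \<le> Max ?T" if "P y" for y
      using T that assms(2) by (cases "b \<le> y") (auto intro: Max_ge order.trans[of y b])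
  qed
  also have "\<dots> \<le> a" using T by (subst Max_le_iff) auto
  finally show ?thesis .
qed

lemma sum_lessThan_const_add:
  fixes Q :: "'a::ab_group_add" and m n :: nat
  shows "(\<Sum>i<m + n. Q) = (\<Sum>i<m. Q) + (\<Sum>i<n. Q)"
  by (induction n) (simp_all add: algebra_simps)

lemma sum_lessThan_const_mult_eq_0:
  fixes Q :: "'a::ab_group_add" and n t :: nat
  assumes "(\<Sum>i<n. Q) = 0"
  shows "(\<Sum>i<n * t. Q) = 0"
  by (induction t) (simp_all add: sum_lessThan_const_add assms)

lemma mult_int_of_nat: "mult_int (int n) Q = (\<Sum>i<n. Q)"
  by (simp add: mult_int_def)

lemma mult_int_eq_self_if_cong_one:
  fixes Q :: "'a::ab_group_add"
  assumes "Q \<in> tors (int n)" and "0 \<le> t" and "k = 1 + int n * t"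
  shows "mult_int k Q = Q"
proof -
  have "k = int (1 + n * nat t)" using assms(2,3) by simp
  moreover have "(\<Sum>i<n. Q) = 0" using assms(1) by (simp add: tors_def mult_int_def)
  ultimately show ?thesis
    by (simp only: mult_int_of_nat sum_lessThan_const_add sum_lessThan_const_mult_eq_0) simp
qed

lemma two_pow_mult_dvd_power_two_pow_sub_one:
  fixes x d :: int
  assumes "even d" and "d dvd x - 1"
  shows "2 ^ j * d dvd x ^ 2 ^ j - 1"
proof (induction j)
  case 0
  then show ?case using assms(2) by simp
next
  case (Suc j)
  then obtain z where z: "x ^ 2 ^ j = 1 + 2 ^ j * d * z"
    by (metis dvd_def diff_eq_eq add.commute)
  obtain h where "d = 2 * h" using assms(1) by blast
  have "x ^ 2 ^ Suc j = (x ^ 2 ^ j) ^ 2"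
    by (simp add: power_mult[symmetric] mult.commute)
  also have "\<dots> = 1 + 2 ^ Suc j * d * (z + 2 ^ j * h * z * z)"
    by (simp add: z \<open>d = 2 * h\<close> power2_eq_square algebra_simps)
  finally have "x ^ 2 ^ Suc j - 1 = 2 ^ Suc j * d * (z + 2 ^ j * h * z * z)"
    by simp
  then show ?case by simp
qed

lemma dvd_power_sub_one_if_dvd_sub_one:
  fixes x d :: int
  assumes "even d" and "d dvd x - 1" and "2 ^ j dvd c"
  shows "2 ^ j * d dvd x ^ c - 1"
proof -
  obtain u where c: "c = 2 ^ j * u" using assms(3) by blast
  have "x ^ 2 ^ j - 1 dvd (x ^ 2 ^ j) ^ u - 1"
    by (simp add: power_diff_1_eq[of "x ^ 2 ^ j" u])
  then show ?thesis
    using two_pow_mult_dvd_power_two_pow_sub_one[OF assms(1,2)] dvd_trans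
    by (metis c power_mult)
qed

lemma twopow_mul_nonneg: "0 \<le> twopow_mul \<alpha> M"
  by (simp add: twopow_mul_def pos_imp_zdiv_nonneg_iff)

lemma dvd_twopow_mul:
  assumes "int M = 2 ^ j * d" and "- int j \<le> \<alpha>"
  shows "d dvd twopow_mul \<alpha> M"
proof (cases "0 \<le> \<alpha>")
  case True
  then show ?thesis by (simp add: twopow_mul_def assms(1))
next
  case False
  with assms(2) have "int M = 2 ^ nat (- \<alpha>) * (2 ^ (j - nat (- \<alpha>)) * d)"
    by (simp add: assms(1) mult.assoc power_add[symmetric])
  with False show ?thesis by (simp add: twopow_mul_def)
qed

lemma mult_int_one_add_twopow_mul_power:
  fixes Q :: "'a::ab_group_add"
  assumes "2 ^ Suc j dvd M" and "2 ^ j dvd c" and "- int j \<le> \<alpha>" and "Q \<in> tors (int M)"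
  shows "mult_int ((1 + twopow_mul \<alpha> M) ^ c) Q = Q"
proof -
  define y where "y = twopow_mul \<alpha> M"
  obtain e where "M = 2 ^ Suc j * e" using assms(1) by blast
  then have M: "int M = 2 ^ j * (2 * int e)" by simp
  have "2 * int e dvd (1 + y) - 1"
    using dvd_twopow_mul[OF M assms(3)] by (simp add: y_def)
  then have "int M dvd (1 + y) ^ c - 1"
    using dvd_power_sub_one_if_dvd_sub_one[OF _ _ assms(2)] M by simp
  then have "(1 + y) ^ c = 1 + int M * (((1 + y) ^ c - 1) div int M)"
    by simp
  moreover have "0 \<le> ((1 + y) ^ c - 1) div int M"
    using twopow_mul_nonneg[of \<alpha> M] by (simp add: y_def pos_imp_zdiv_nonneg_iff div_int_pos_iff)
  ultimately show ?thesis
    unfolding y_def[symmetric] by (rule mult_int_eq_self_if_cong_one[OF assms(4), rotated])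
qed

lemma mem_Nset_if_ge:
  assumes "group G" and "\<And>Q. act \<one>\<^bsub>G\<^esub> Q = Q" and "subgroup (H P) G"
    and "M \<noteq> 0" and "2 ^ Suc j dvd M" and "2 ^ j dvd c" and "- int j \<le> \<alpha>"
  shows "\<alpha> \<in> Nset G act H c M P"
proof -
  have "Suc j \<le> multiplicity 2 M"
    using assms(4,5) by (intro multiplicity_geI) auto
  then have "- int (multiplicity 2 M) < \<alpha>" using assms(7) by simp
  moreover have "\<one>\<^bsub>G\<^esub> \<in> carrier G" "\<one>\<^bsub>G\<^esub> \<in> H P"
    using assms(1,3) by (auto intro: group.is_monoid subgroup.one_closed)
  moreover have "\<forall>Q\<in>tors (int M). act \<one>\<^bsub>G\<^esub> Q = mult_int ((1 + twopow_mul \<alpha> M) ^ c) Q"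
    using assms(2) mult_int_one_add_twopow_mul_power[OF assms(5-7)] by metis
  ultimately show ?thesis unfolding Nset_def by blast
qed

lemma beta_P_le:
  assumes "group G" and "\<And>Q. act \<one>\<^bsub>G\<^esub> Q = Q" and "subgroup (H P) G"
    and "M \<noteq> 0" and "2 ^ Suc j dvd M" and "2 ^ j dvd c"
  shows "beta_P G act H c M P \<le> - int j - 1"
  unfolding beta_P_def
proof (rule Greatest_int_le[where b = "- int (multiplicity 2 M)"])
  show "- int (multiplicity 2 M) \<notin> Nset G act H c M P"
    by (simp add: Nset_def)
  show "\<alpha> \<le> - int j - 1" if "\<alpha> \<notin> Nset G act H c M P" for \<alpha>
    using that mem_Nset_if_ge[of G act H P M j c \<alpha>] assms by force
qed

lemma v2q_Nnum:
  assumes "M \<noteq> 0"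
  shows "v2q (Nnum G act H c M) = beta G act H c M + 1 + int (multiplicity 2 M)"
proof -
  obtain w where M: "M = 2 ^ multiplicity 2 M * w" and "odd w"
    using multiplicity_decompose'[of M 2] assms by auto
  have "Nnum G act H c M = of_int (int w) * 2 powi (beta G act H c M + 1 + int (multiplicity 2 M))"
    unfolding Nnum_def by (subst M) (simp add: power_int_add)
  then show ?thesis using v2q_odd_mult_two_powi[of "int w"] \<open>odd w\<close> by simp
qed

theorem lemma3p4:
  fixes G :: "('g, 'b) monoid_scheme" and act :: "'g \<Rightarrow> 'a::ab_group_add \<Rightarrow> 'a"
    and H :: "'a \<Rightarrow> 'g set" and c M :: nat
  assumes grp: "group G"
    and act_one: "\<And>Q. act \<one>\<^bsub>G\<^esub> Q = Q"
    and act_mult: "\<And>\<sigma> \<tau> Q. \<sigma> \<in> carrier G \<Longrightarrow> \<tau> \<in> carrier G \<Longrightarrow>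
                      act (\<sigma> \<otimes>\<^bsub>G\<^esub> \<tau>) Q = act \<sigma> (act \<tau> Q)"
    and act_add: "\<And>\<sigma> P Q. \<sigma> \<in> carrier G \<Longrightarrow> act \<sigma> (P + Q) = act \<sigma> P + act \<sigma> Q"
    and fin_tors: "\<And>n. 1 \<le> n \<Longrightarrow> finite (tors n :: 'a set)"
    and c_pos: "1 \<le> c"
    and serre: "\<And>l k. 0 < l \<Longrightarrow> 0 < k \<Longrightarrow> coprime l k \<Longrightarrow>
                 \<exists>\<sigma>\<in>carrier G. \<forall>Q\<in>tors (int l). act \<sigma> Q = mult_int (int k ^ c) Q"
    and H_sub: "\<And>P. P \<in> tors (int M) \<Longrightarrow> subgroup (H P) G"
    and M_pos: "1 \<le> M"
    and M_KX: "fixing G act M \<subseteq> H 0"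
    and M_v2: "multiplicity 2 M \<ge> multiplicity 2 c + 2"
    and M_min: "\<And>M'. 1 \<le> M' \<Longrightarrow> fixing G act M' \<subseteq> H 0 \<Longrightarrow>
                 multiplicity 2 M' \<ge> multiplicity 2 c + 2 \<Longrightarrow> M \<le> M'"
  shows "v2q (Nnum G act H c M) + int (multiplicity 2 c) \<le> int (multiplicity 2 M)"
proof -
  define j where "j = multiplicity 2 c"
  have "M \<noteq> 0" using M_pos by simp
  have c_dvd: "2 ^ j dvd c" unfolding j_def by (rule multiplicity_dvd)
  have M_dvd: "2 ^ Suc j dvd M" using M_v2 unfolding j_def by (intro multiplicity_dvd') simp
  have zero: "0 \<in> tors (int M)" by (simp add: tors_def mult_int_def)
  have "beta G act H c M \<le> beta_P G act H c M 0"
    unfolding beta_def using fin_tors M_pos zero by (intro Min_le) auto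
  also have "\<dots> \<le> - int j - 1"
    by (rule beta_P_le[of G act H 0 M j c, OF grp act_one H_sub[OF zero] \<open>M \<noteq> 0\<close> M_dvd c_dvd])
  finally show ?thesis using v2q_Nnum[of M G act H c] \<open>M \<noteq> 0\<close> unfolding j_def by simp
qed

end
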